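(* Let $\Gamma$ be an orthosymmetric, convex, compact set and $0<p<1$. If there is a constant $C>0$ with $D(\Gamma,\epsilon)\le C\epsilon^{-p}$ for all $\epsilon\in(0,1]$, then there is a constant $C'>0$ with $D_{\mathsf c}(\Gamma,\epsilon)\le C'\epsilon^{-p/(1-p)}$ for all $\epsilon\in(0,1]$.
   Context: Orthosymmetric: closed under flipping signs of any coordinates. Kolmogorov dimension $D(\Gamma,\epsilon)$: the smallest integer $d$ such that $\inf_{\Pi_d}\sup_{\boldsymbol\theta\in\Gamma}\|\boldsymbol\theta-\Pi_d\boldsymbol\theta\|_2\le\epsilon$ over $d$-dimensional orthogonal projections. Coordinate-wise Kolmogorov dimension $D_{\mathsf c}(\Gamma,\epsilon)$: the smallest integer $d$ such that some set $A$ of $d$ coordinates satisfies $\sup_{\boldsymbol\theta\in\Gamma}\sum_{i\notin A}\theta_i^2\le\epsilon^2$. *)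

theory Defs
  imports "HOL-Analysis.Analysis"
begin

definition ell2 :: "(nat \<Rightarrow> real) set" where
  "ell2 = {x. summable (\<lambda>i. (x i)\<^sup>2)}"

definition l2inner :: "(nat \<Rightarrow> real) \<Rightarrow> (nat \<Rightarrow> real) \<Rightarrow> real" where
  "l2inner x y = (\<Sum>i. x i * y i)"

definition l2norm :: "(nat \<Rightarrow> real) \<Rightarrow> real" where
  "l2norm x = sqrt (\<Sum>i. (x i)\<^sup>2)"

text \<open>Compactness in the l2 norm topology (sequential compactness, which is
  compactness in a metric space).\<close>

definition l2_compact :: "(nat \<Rightarrow> real) set \<Rightarrow> bool" where
  "l2_compact G \<longleftrightarrow> G \<subseteq> ell2 \<and>
     (\<forall>x. (\<forall>k. x k \<in> G) \<longrightarrow>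
        (\<exists>(r::nat \<Rightarrow> nat) t. strict_mono r \<and> t \<in> G \<and>
               (\<lambda>k. l2norm (\<lambda>i. x (r k) i - t i)) \<longlonglongrightarrow> 0))"

definition l2_convex :: "(nat \<Rightarrow> real) set \<Rightarrow> bool" where
  "l2_convex G \<longleftrightarrow> (\<forall>x\<in>G. \<forall>y\<in>G. \<forall>t::real. 0 \<le> t \<and> t \<le> 1 \<longrightarrow>
      (\<lambda>i. t * x i + (1 - t) * y i) \<in> G)"

definition orthosymmetric :: "(nat \<Rightarrow> real) set \<Rightarrow> bool" where
  "orthosymmetric G \<longleftrightarrow> (\<forall>x\<in>G. \<forall>s::nat \<Rightarrow> real. (\<forall>i. s i = 1 \<or> s i = -1) \<longrightarrow>
      (\<lambda>i. s i * x i) \<in> G)"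

text \<open>A d-dimensional orthogonal projection is given by an orthonormal family
  u 0, ..., u (d-1) in l2; it maps x to the sum of <x, u j> u j.\<close>

definition orthonormal_family :: "nat \<Rightarrow> (nat \<Rightarrow> nat \<Rightarrow> real) \<Rightarrow> bool" where
  "orthonormal_family d u \<longleftrightarrow> (\<forall>j<d. u j \<in> ell2) \<and>
     (\<forall>j<d. \<forall>k<d. l2inner (u j) (u k) = (if j = k then 1 else 0))"

definition proj_onto :: "nat \<Rightarrow> (nat \<Rightarrow> nat \<Rightarrow> real) \<Rightarrow> (nat \<Rightarrow> real) \<Rightarrow> (nat \<Rightarrow> real)" where
  "proj_onto d u x = (\<lambda>i. \<Sum>j<d. l2inner x (u j) * u j i)"

definition kolm_width :: "(nat \<Rightarrow> real) set \<Rightarrow> nat \<Rightarrow> ereal" where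
  "kolm_width G d = (INF u \<in> {u. orthonormal_family d u}.
       SUP x \<in> G. ereal (l2norm (\<lambda>i. x i - proj_onto d u x i)))"

definition kolm_dim :: "(nat \<Rightarrow> real) set \<Rightarrow> real \<Rightarrow> nat" where
  "kolm_dim G \<epsilon> = (LEAST d. kolm_width G d \<le> ereal \<epsilon>)"

definition coord_kolm_dim :: "(nat \<Rightarrow> real) set \<Rightarrow> real \<Rightarrow> nat" where
  "coord_kolm_dim G \<epsilon> = (LEAST d. \<exists>A::nat set. finite A \<and> card A = d \<and>
      (SUP x \<in> G. ereal (\<Sum>i. if i \<in> A then 0 else (x i)\<^sup>2)) \<le> ereal (\<epsilon>\<^sup>2))"

end

theory Submission
  imports Defs
begin

text \<open>Let \<open>u\<close> be an orthonormal family of size \<open>n\<close> and \<open>w i = (\<Sum>j<n. (u j i)\<^sup>2)\<close>, so that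
  the weights \<open>w i\<close> sum to at most \<open>n\<close>. For \<open>x \<in> \<Gamma>\<close> and a finite set \<open>F\<close> of coordinates,
  orthosymmetry and convexity put every sign pattern of the restriction of \<open>x\<close> to \<open>F\<close> into
  \<open>\<Gamma>\<close>; a greedy choice of signs gives such a point \<open>y\<close> with
  \<open>\<parallel>y - P y\<parallel> \<parallel>x\<^sub>F\<parallel> \<ge> \<parallel>x\<^sub>F\<parallel>\<^sup>2 - (\<Sum>i\<in>F. (x i)\<^sup>2 w i)\<close>.
  For \<open>m = D(\<Gamma>, \<delta>/4)\<close> this shows that at most \<open>4m/3\<close> coordinates carry an entry larger than
  \<open>\<delta>\<close> (otherwise one of them has weight at most \<open>3/4\<close>); for \<open>n = D(\<Gamma>, \<epsilon>/4)\<close> it shows that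
  the remaining coordinates of any \<open>x \<in> \<Gamma>\<close> carry energy \<open>R\<^sup>2 \<le> \<epsilon> R / 4 + n \<delta>\<^sup>2\<close>.
  Taking \<open>\<delta>\<close> a small multiple of \<open>\<epsilon> powr (1/(1-p))\<close> makes \<open>n \<delta>\<^sup>2 \<le> \<epsilon>\<^sup>2/2\<close>, hence
  \<open>R \<le> \<epsilon>\<close>; so \<open>D\<^sub>c(\<Gamma>, \<epsilon>) \<le> 2 D(\<Gamma>, \<delta>/4)\<close>, which is at most a constant times
  \<open>\<delta> powr (-p)\<close>, i.e. a constant times \<open>\<epsilon> powr (-p/(1-p))\<close>.\<close>

lemma ell2_add:
  assumes "x \<in> ell2" "y \<in> ell2"
  shows "(\<lambda>i. x i + y i) \<in> ell2"
proof -
  have "(x i + y i)\<^sup>2 \<le> 2 * (x i)\<^sup>2 + 2 * (y i)\<^sup>2" for i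
    using sum_squares_ge_zero[of "x i - y i" 0] by (simp add: power2_eq_square algebra_simps)
  moreover have "summable (\<lambda>i. 2 * (x i)\<^sup>2 + 2 * (y i)\<^sup>2)"
    using assms by (intro summable_add summable_mult) (auto simp: ell2_def)
  ultimately show ?thesis
    unfolding ell2_def by (auto intro: summable_comparison_test'[where N = 0])
qed

lemma ell2_scale:
  assumes "x \<in> ell2"
  shows "(\<lambda>i. c * x i) \<in> ell2"
  using assms summable_mult[of "\<lambda>i. (x i)\<^sup>2" "c\<^sup>2"] by (simp add: ell2_def power_mult_distrib)

lemma ell2_diff:
  assumes "x \<in> ell2" "y \<in> ell2"
  shows "(\<lambda>i. x i - y i) \<in> ell2"
  using ell2_add[OF assms(1) ell2_scale[OF assms(2), of "-1"]] by simp

lemma ell2_sum: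
  assumes "finite J" "\<And>j. j \<in> J \<Longrightarrow> u j \<in> ell2"
  shows "(\<lambda>i. \<Sum>j\<in>J. c j * u j i) \<in> ell2"
  using assms
proof (induction J rule: finite_induct)
  case empty
  then show ?case by (simp add: ell2_def)
next
  case (insert j J)
  then show ?case using ell2_add[OF ell2_scale[of "u j" "c j"] insert.IH] by simp
qed

lemma proj_onto_in_ell2: "orthonormal_family n u \<Longrightarrow> proj_onto n u x \<in> ell2"
  unfolding proj_onto_def orthonormal_family_def by (rule ell2_sum) auto

lemma ell2_finite_support:
  assumes "finite F" "\<And>i. i \<notin> F \<Longrightarrow> y i = 0"
  shows "y \<in> ell2"
  unfolding ell2_def using assms by (auto intro: summable_finite[of F])

lemma l2inner_finite_support:
  "finite F \<Longrightarrow> (\<And>i. i \<notin> F \<Longrightarrow> y i = 0) \<Longrightarrow> l2inner y v = (\<Sum>i\<in>F. y i * v i)"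
  unfolding l2inner_def by (rule suminf_finite) auto

lemma sum_sq_le_suminf_sq: "x \<in> ell2 \<Longrightarrow> finite F \<Longrightarrow> (\<Sum>i\<in>F. (x i)\<^sup>2) \<le> (\<Sum>i. (x i)\<^sup>2)"
  unfolding ell2_def by (rule sum_le_suminf) auto

lemma orthonormal_family_sum_sq_le_1:
  assumes "orthonormal_family n u" "j < n" "finite F"
  shows "(\<Sum>i\<in>F. (u j i)\<^sup>2) \<le> 1"
proof -
  have "(\<Sum>i. (u j i)\<^sup>2) = l2inner (u j) (u j)"
    by (simp add: l2inner_def power2_eq_square)
  also have "\<dots> = 1"
    using assms by (simp add: orthonormal_family_def)
  finally show ?thesis
    using assms sum_sq_le_suminf_sq[of "u j" F] by (simp add: orthonormal_family_def)
qed

lemma orthonormal_family_sum_weights_le: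
  assumes "orthonormal_family n u" "finite F"
  shows "(\<Sum>i\<in>F. \<Sum>j<n. (u j i)\<^sup>2) \<le> real n"
proof -
  have "(\<Sum>i\<in>F. \<Sum>j<n. (u j i)\<^sup>2) = (\<Sum>j<n. \<Sum>i\<in>F. (u j i)\<^sup>2)"
    by (rule sum.swap)
  also have "\<dots> \<le> (\<Sum>j<n. 1)"
    using orthonormal_family_sum_sq_le_1[OF assms(1) _ assms(2)] by (intro sum_mono) simp
  finally show ?thesis by simp
qed

text \<open>Writing \<open>c j = \<langle>y, u j\<rangle>\<close>, one has \<open>\<langle>y - P y, y\<rangle> = \<parallel>y\<parallel>\<^sup>2 - \<Sum>j. (c j)\<^sup>2\<close>;
  Cauchy--Schwarz on the support of \<open>y\<close> then gives the bound.\<close>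

lemma residual_lower_bound:
  assumes u: "orthonormal_family n u" and F: "finite F" and supp: "\<And>i. i \<notin> F \<Longrightarrow> y i = 0"
  shows "(\<Sum>i\<in>F. (y i)\<^sup>2) - (\<Sum>j<n. (\<Sum>i\<in>F. y i * u j i)\<^sup>2)
           \<le> l2norm (\<lambda>i. y i - proj_onto n u y i) * sqrt (\<Sum>i\<in>F. (y i)\<^sup>2)"
proof -
  define z where "z i = y i - proj_onto n u y i" for i
  define c where "c j = (\<Sum>i\<in>F. y i * u j i)" for j
  have "l2inner y (u j) = c j" for j
    unfolding c_def by (rule l2inner_finite_support[OF F supp])
  then have z: "z i = y i - (\<Sum>j<n. c j * u j i)" for i
    by (simp add: z_def proj_onto_def)
  have "z \<in> ell2"
    unfolding z_def by (rule ell2_diff[OF ell2_finite_support[OF F supp] proj_onto_in_ell2[OF u]])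
  have "(\<Sum>i\<in>F. z i * y i) = (\<Sum>i\<in>F. (y i)\<^sup>2) - (\<Sum>i\<in>F. \<Sum>j<n. c j * u j i * y i)"
    by (simp add: z left_diff_distrib sum_subtractf sum_distrib_right power2_eq_square)
  also have "(\<Sum>i\<in>F. \<Sum>j<n. c j * u j i * y i) = (\<Sum>j<n. \<Sum>i\<in>F. c j * u j i * y i)"
    by (rule sum.swap)
  also have "(\<Sum>j<n. \<Sum>i\<in>F. c j * u j i * y i) = (\<Sum>j<n. (c j)\<^sup>2)"
    by (simp add: c_def sum_distrib_left power2_eq_square mult_ac)
  finally have "(\<Sum>i\<in>F. (y i)\<^sup>2) - (\<Sum>j<n. (c j)\<^sup>2) = (\<Sum>i\<in>F. z i * y i)" ..
  also have "\<dots> \<le> sqrt ((\<Sum>i\<in>F. z i * y i)\<^sup>2)"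
    by simp
  also have "\<dots> \<le> sqrt ((\<Sum>i\<in>F. (z i)\<^sup>2) * (\<Sum>i\<in>F. (y i)\<^sup>2))"
    by (rule real_sqrt_le_mono[OF Cauchy_Schwarz_ineq_sum])
  also have "\<dots> = sqrt (\<Sum>i\<in>F. (z i)\<^sup>2) * sqrt (\<Sum>i\<in>F. (y i)\<^sup>2)"
    by (rule real_sqrt_mult)
  also have "\<dots> \<le> l2norm z * sqrt (\<Sum>i\<in>F. (y i)\<^sup>2)"
    using sum_sq_le_suminf_sq[OF \<open>z \<in> ell2\<close> F] unfolding l2norm_def
    by (intro mult_right_mono) (simp_all add: sum_nonneg)
  finally show ?thesis
    unfolding z_def[abs_def] c_def .
qed

text \<open>Greedy choice of signs, one coordinate at a time: the new sign is chosen to make the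
  cross term nonpositive.\<close>

lemma exists_signs_projection_le:
  fixes u :: "nat \<Rightarrow> nat \<Rightarrow> real" and x :: "nat \<Rightarrow> real"
  assumes "finite F"
  shows "\<exists>s. (\<forall>i. s i = 1 \<or> s i = -1) \<and>
           (\<Sum>j<n. (\<Sum>i\<in>F. s i * x i * u j i)\<^sup>2) \<le> (\<Sum>i\<in>F. (x i)\<^sup>2 * (\<Sum>j<n. (u j i)\<^sup>2))"
  using assms
proof (induction F rule: finite_induct)
  case empty
  show ?case by (rule exI[of _ "\<lambda>_. 1"]) simp
next
  case (insert k F)
  then obtain s where s: "\<forall>i. s i = 1 \<or> s i = -1"
    and s_le: "(\<Sum>j<n. (\<Sum>i\<in>F. s i * x i * u j i)\<^sup>2) \<le> (\<Sum>i\<in>F. (x i)\<^sup>2 * (\<Sum>j<n. (u j i)\<^sup>2))"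
    by blast
  define a where "a j = (\<Sum>i\<in>F. s i * x i * u j i)" for j
  define b where "b j = x k * u j k" for j
  define \<sigma> :: real where "\<sigma> = (if (\<Sum>j<n. a j * b j) \<le> 0 then 1 else -1)"
  define s' where "s' = s(k := \<sigma>)"
  have s'_sum: "(\<Sum>i\<in>insert k F. s' i * x i * u j i) = a j + \<sigma> * b j" for j
  proof -
    have "(\<Sum>i\<in>F. s' i * x i * u j i) = a j"
      unfolding a_def s'_def using insert.hyps by (intro sum.cong) auto
    then show ?thesis
      using insert.hyps by (simp add: s'_def b_def mult_ac)
  qed
  have "(a j + \<sigma> * b j)\<^sup>2 = (a j)\<^sup>2 + 2 * \<sigma> * (a j * b j) + (b j)\<^sup>2" for j
    by (simp add: \<sigma>_def power2_eq_square algebra_simps)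
  then have "(\<Sum>j<n. (a j + \<sigma> * b j)\<^sup>2)
               = (\<Sum>j<n. (a j)\<^sup>2) + 2 * (\<sigma> * (\<Sum>j<n. a j * b j)) + (\<Sum>j<n. (b j)\<^sup>2)"
    by (simp add: sum.distrib sum_distrib_left mult_ac)
  also have "\<dots> \<le> (\<Sum>j<n. (a j)\<^sup>2) + (\<Sum>j<n. (b j)\<^sup>2)"
    by (simp add: \<sigma>_def)
  also have "(\<Sum>j<n. (b j)\<^sup>2) = (x k)\<^sup>2 * (\<Sum>j<n. (u j k)\<^sup>2)"
    by (simp add: b_def power_mult_distrib sum_distrib_left)
  finally have "(\<Sum>j<n. (\<Sum>i\<in>insert k F. s' i * x i * u j i)\<^sup>2)
                  \<le> (\<Sum>i\<in>insert k F. (x i)\<^sup>2 * (\<Sum>j<n. (u j i)\<^sup>2))"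
    using s_le insert.hyps unfolding s'_sum a_def by simp
  moreover have "\<forall>i. s' i = 1 \<or> s' i = -1"
    using s by (simp add: s'_def \<sigma>_def)
  ultimately show ?case by blast
qed

lemma orthosymmetric_convex_restrict:
  assumes os: "orthosymmetric G" and cv: "l2_convex G" and x: "x \<in> G"
  shows "(\<lambda>i. if i \<in> F then x i else 0) \<in> G"
proof -
  define s :: "nat \<Rightarrow> real" where "s i = (if i \<in> F then 1 else -1)" for i
  have "(\<lambda>i. s i * x i) \<in> G"
    using os x unfolding orthosymmetric_def s_def by auto
  then have "(\<lambda>i. (1/2) * x i + (1 - 1/2) * (s i * x i)) \<in> G"
    using cv[unfolded l2_convex_def, rule_format, OF x, of _ "1/2"] by simp
  also have "(\<lambda>i. (1/2) * x i + (1 - 1/2) * (s i * x i)) = (\<lambda>i. if i \<in> F then x i else 0)"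
    by (auto simp: s_def)
  finally show ?thesis .
qed

lemma exists_point_with_large_residual:
  assumes os: "orthosymmetric G" and cv: "l2_convex G" and x: "x \<in> G"
    and F: "finite F" and u: "orthonormal_family n u"
  shows "\<exists>y\<in>G. (\<Sum>i\<in>F. (x i)\<^sup>2) - (\<Sum>i\<in>F. (x i)\<^sup>2 * (\<Sum>j<n. (u j i)\<^sup>2))
                 \<le> l2norm (\<lambda>i. y i - proj_onto n u y i) * sqrt (\<Sum>i\<in>F. (x i)\<^sup>2)"
proof -
  obtain s where s: "\<forall>i. s i = 1 \<or> s i = -1"
    and s_le: "(\<Sum>j<n. (\<Sum>i\<in>F. s i * x i * u j i)\<^sup>2) \<le> (\<Sum>i\<in>F. (x i)\<^sup>2 * (\<Sum>j<n. (u j i)\<^sup>2))"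
    using exists_signs_projection_le[OF F] by blast
  define y where "y = (\<lambda>i. s i * (if i \<in> F then x i else 0))"
  have "y \<in> G"
    using os s orthosymmetric_convex_restrict[OF os cv x] unfolding y_def orthosymmetric_def by simp
  have "(s i)\<^sup>2 = 1" for i
    using s by (metis power2_minus power_one)
  then have y_sq: "(\<Sum>i\<in>F. (y i)\<^sup>2) = (\<Sum>i\<in>F. (x i)\<^sup>2)"
    by (simp add: y_def power_mult_distrib)
  have y_u: "(\<Sum>i\<in>F. y i * u j i) = (\<Sum>i\<in>F. s i * x i * u j i)" for j
    by (intro sum.cong) (auto simp: y_def)
  have "(\<Sum>i\<in>F. (x i)\<^sup>2) - (\<Sum>i\<in>F. (x i)\<^sup>2 * (\<Sum>j<n. (u j i)\<^sup>2))
          \<le> (\<Sum>i\<in>F. (y i)\<^sup>2) - (\<Sum>j<n. (\<Sum>i\<in>F. y i * u j i)\<^sup>2)"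
    using s_le unfolding y_sq y_u by linarith
  also have "\<dots> \<le> l2norm (\<lambda>i. y i - proj_onto n u y i) * sqrt (\<Sum>i\<in>F. (y i)\<^sup>2)"
    by (rule residual_lower_bound[OF u F]) (simp add: y_def)
  finally show ?thesis
    using \<open>y \<in> G\<close> unfolding y_sq by blast
qed

lemma kolm_width_lower_bound:
  assumes "\<And>u. orthonormal_family d u \<Longrightarrow> \<exists>x\<in>G. L \<le> l2norm (\<lambda>i. x i - proj_onto d u x i)"
  shows "ereal L \<le> kolm_width G d"
  unfolding kolm_width_def
proof (rule INF_greatest)
  fix u assume "u \<in> {u. orthonormal_family d u}"
  then obtain x where "x \<in> G" "L \<le> l2norm (\<lambda>i. x i - proj_onto d u x i)"
    using assms by auto
  then show "ereal L \<le> (SUP x\<in>G. ereal (l2norm (\<lambda>i. x i - proj_onto d u x i)))"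
    by (intro SUP_upper2[of x]) auto
qed

definition tail_sq :: "nat \<Rightarrow> (nat \<Rightarrow> real) \<Rightarrow> real" where
  "tail_sq d x = (\<Sum>i. if i < d then 0 else (x i)\<^sup>2)"

lemma sums_tail:
  fixes f :: "nat \<Rightarrow> real"
  assumes "summable f"
  shows "(\<lambda>i. if i < d then 0 else f i) sums (suminf f - sum f {..<d})"
  using sums_If_finite_set'[OF summable_sums[OF assms], of "{..<d}" "suminf f - sum f {..<d}" "\<lambda>_. 0"]
  by (simp add: sum_negf)

lemma tail_sq_tendsto_0:
  assumes "x \<in> ell2"
  shows "(\<lambda>d. tail_sq d x) \<longlonglongrightarrow> 0"
proof -
  have s: "summable (\<lambda>i. (x i)\<^sup>2)"
    using assms by (simp add: ell2_def)
  have "(\<lambda>d. (\<Sum>i. (x i)\<^sup>2) - (\<Sum>i<d. (x i)\<^sup>2)) \<longlonglongrightarrow> (\<Sum>i. (x i)\<^sup>2) - (\<Sum>i. (x i)\<^sup>2)"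
    by (intro tendsto_diff tendsto_const summable_LIMSEQ[OF s])
  then show ?thesis
    unfolding tail_sq_def sums_unique[OF sums_tail[OF s], symmetric] by simp
qed

lemma tail_sq_le:
  assumes x: "x \<in> ell2" and t: "t \<in> ell2"
  shows "tail_sq d x \<le> 2 * tail_sq d t + 2 * (l2norm (\<lambda>i. x i - t i))\<^sup>2"
proof -
  have sx: "summable (\<lambda>i. (x i)\<^sup>2)" and st: "summable (\<lambda>i. (t i)\<^sup>2)"
    and sxt: "summable (\<lambda>i. (x i - t i)\<^sup>2)"
    using x t ell2_diff[OF x t] by (auto simp: ell2_def)
  have "(x i)\<^sup>2 \<le> 2 * (t i)\<^sup>2 + 2 * (x i - t i)\<^sup>2" for i
    using sum_squares_ge_zero[of "x i - 2 * t i" 0] by (simp add: power2_eq_square algebra_simps)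
  then have "tail_sq d x \<le> (\<Sum>i. 2 * (if i < d then 0 else (t i)\<^sup>2) + 2 * (x i - t i)\<^sup>2)"
    unfolding tail_sq_def
    by (intro suminf_le summable_add summable_mult sums_summable[OF sums_tail] sx st sxt) auto
  also have "\<dots> = 2 * tail_sq d t + 2 * (\<Sum>i. (x i - t i)\<^sup>2)"
    unfolding tail_sq_def
    by (intro sums_unique[symmetric] sums_add sums_mult summable_sums sums_summable[OF sums_tail] st sxt)
  also have "(\<Sum>i. (x i - t i)\<^sup>2) = (l2norm (\<lambda>i. x i - t i))\<^sup>2"
    unfolding l2norm_def by (simp add: suminf_nonneg[OF sxt])
  finally show ?thesis .
qed

lemma l2_compact_uniform_tail:
  assumes cp: "l2_compact G" and "\<eta> > 0"
  shows "\<exists>d. \<forall>x\<in>G. tail_sq d x \<le> \<eta>\<^sup>2"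
proof (rule ccontr)
  assume "\<not> ?thesis"
  then obtain X where X: "\<And>d. X d \<in> G" "\<And>d. \<eta>\<^sup>2 < tail_sq d (X d)"
    by (metis not_le)
  obtain r t where r: "strict_mono r" and "t \<in> G"
    and lim: "(\<lambda>k. l2norm (\<lambda>i. X (r k) i - t i)) \<longlonglongrightarrow> 0"
    using cp X(1) unfolding l2_compact_def by blast
  have ell2: "G \<subseteq> ell2"
    using cp by (simp add: l2_compact_def)
  obtain K where K: "\<And>k. k \<ge> K \<Longrightarrow> \<bar>l2norm (\<lambda>i. X (r k) i - t i)\<bar> < \<eta>/2"
    using LIMSEQ_D[OF lim, of "\<eta>/2"] \<open>\<eta> > 0\<close> by auto
  obtain D where D: "\<And>d. d \<ge> D \<Longrightarrow> \<bar>tail_sq d t\<bar> < \<eta>\<^sup>2/4"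
    using LIMSEQ_D[OF tail_sq_tendsto_0, of t "\<eta>\<^sup>2/4"] \<open>\<eta> > 0\<close> \<open>t \<in> G\<close> ell2 by auto
  define k where "k = max K D"
  have "r k \<ge> D"
    using seq_suble[OF r, of k] by (simp add: k_def)
  have "\<bar>l2norm (\<lambda>i. X (r k) i - t i)\<bar>\<^sup>2 < (\<eta>/2)\<^sup>2"
    using K[of k] by (intro power_strict_mono) (auto simp: k_def)
  moreover have "tail_sq (r k) (X (r k)) \<le> 2 * tail_sq (r k) t + 2 * (l2norm (\<lambda>i. X (r k) i - t i))\<^sup>2"
    using tail_sq_le X(1) \<open>t \<in> G\<close> ell2 by blast
  ultimately show False
    using X(2)[of "r k"] D[OF \<open>r k \<ge> D\<close>] by (simp add: power_divide)
qed

definition unit_vec :: "nat \<Rightarrow> nat \<Rightarrow> real" where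
  "unit_vec j i = (if i = j then 1 else 0)"

lemma l2inner_unit_vec: "l2inner x (unit_vec j) = x j"
proof -
  have "l2inner x (unit_vec j) = (\<Sum>i\<in>{j}. x i * unit_vec j i)"
    unfolding l2inner_def by (rule suminf_finite) (auto simp: unit_vec_def)
  then show ?thesis
    by (simp add: unit_vec_def)
qed

lemma orthonormal_family_unit_vec: "orthonormal_family d unit_vec"
  unfolding orthonormal_family_def
proof (intro conjI allI impI)
  show "unit_vec j \<in> ell2" for j
    by (rule ell2_finite_support[of "{j}"]) (simp_all add: unit_vec_def)
qed (simp add: l2inner_unit_vec unit_vec_def)

lemma proj_onto_unit_vec: "proj_onto d unit_vec x i = (if i < d then x i else 0)"
proof -
  have "x j * unit_vec j i = (if i = j then x j else 0)" for j
    by (simp add: unit_vec_def)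
  then show ?thesis
    by (simp add: proj_onto_def l2inner_unit_vec)
qed

lemma l2_compact_kolm_width_le:
  assumes cp: "l2_compact G" and "\<eta> > 0"
  shows "\<exists>d. kolm_width G d \<le> ereal \<eta>"
proof -
  obtain d where d: "\<forall>x\<in>G. tail_sq d x \<le> \<eta>\<^sup>2"
    using l2_compact_uniform_tail[OF assms] by blast
  have "kolm_width G d \<le> (SUP x\<in>G. ereal (l2norm (\<lambda>i. x i - proj_onto d unit_vec x i)))"
    unfolding kolm_width_def by (rule INF_lower) (simp add: orthonormal_family_unit_vec)
  also have "\<dots> \<le> ereal \<eta>"
  proof (rule SUP_least)
    fix x assume "x \<in> G"
    have "(\<lambda>i. (x i - proj_onto d unit_vec x i)\<^sup>2) = (\<lambda>i. if i < d then 0 else (x i)\<^sup>2)"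
      by (simp add: proj_onto_unit_vec fun_eq_iff)
    then have "l2norm (\<lambda>i. x i - proj_onto d unit_vec x i) = sqrt (tail_sq d x)"
      by (simp add: l2norm_def tail_sq_def)
    also have "\<dots> \<le> \<eta>"
      using d \<open>x \<in> G\<close> \<open>\<eta> > 0\<close> by (simp add: real_le_lsqrt)
    finally show "ereal (l2norm (\<lambda>i. x i - proj_onto d unit_vec x i)) \<le> ereal \<eta>"
      by simp
  qed
  finally show ?thesis ..
qed

lemma kolm_width_kolm_dim_le:
  assumes "l2_compact G" and "\<eta> > 0"
  shows "kolm_width G (kolm_dim G \<eta>) \<le> ereal \<eta>"
  unfolding kolm_dim_def using l2_compact_kolm_width_le[OF assms] by (rule LeastI_ex)

lemma card_large_coords_subset_le:
  assumes os: "orthosymmetric G" and cv: "l2_convex G" and "0 < \<delta>"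
    and width: "kolm_width G m \<le> ereal (\<delta>/4)"
    and S: "finite S" "S \<subseteq> {i. \<exists>x\<in>G. \<delta> < \<bar>x i\<bar>}"
  shows "3 * card S \<le> 4 * m"
proof (rule ccontr)
  assume "\<not> 3 * card S \<le> 4 * m"
  then have "0 < card S" and ratio: "real m / real (card S) < 3/4"
    by (auto simp: field_simps)
  have "\<forall>i\<in>S. \<exists>x. x \<in> G \<and> \<delta> < \<bar>x i\<bar>"
    using S(2) by blast
  then obtain z where z: "\<And>i. i \<in> S \<Longrightarrow> z i \<in> G \<and> \<delta> < \<bar>z i i\<bar>"
    by metis
  define L where "L = \<delta> * (1 - real m / real (card S))"
  have "ereal L \<le> kolm_width G m"
  proof (rule kolm_width_lower_bound)
    fix u assume u: "orthonormal_family m u"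
    define w where "w i = (\<Sum>j<m. (u j i)\<^sup>2)" for i
    have "\<exists>i\<in>S. w i \<le> real m / real (card S)"
    proof (rule ccontr)
      assume "\<not> ?thesis"
      then have "(\<Sum>i\<in>S. real m / real (card S)) < (\<Sum>i\<in>S. w i)"
        using \<open>0 < card S\<close> S(1) by (intro sum_strict_mono) (auto simp: not_le)
      then show False
        using orthonormal_family_sum_weights_le[OF u S(1)] \<open>0 < card S\<close> by (simp add: w_def)
    qed
    then obtain i where "i \<in> S" and wi: "w i \<le> real m / real (card S)" ..
    define c where "c = z i i"
    have "\<delta> < \<bar>c\<bar>"
      using z \<open>i \<in> S\<close> by (simp add: c_def)
    have "finite {i}"
      by simp
    obtain y where "y \<in> G"
      and y: "c\<^sup>2 - c\<^sup>2 * w i \<le> l2norm (\<lambda>k. y k - proj_onto m u y k) * \<bar>c\<bar>"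
      using exists_point_with_large_residual[OF os cv _ \<open>finite {i}\<close> u, of "z i"] z \<open>i \<in> S\<close>
      by (auto simp: w_def c_def)
    have "\<bar>c\<bar> * (\<bar>c\<bar> * (1 - w i)) \<le> \<bar>c\<bar> * l2norm (\<lambda>k. y k - proj_onto m u y k)"
      using y by (simp add: power2_eq_square algebra_simps)
    then have "\<bar>c\<bar> * (1 - w i) \<le> l2norm (\<lambda>k. y k - proj_onto m u y k)"
      using \<open>\<delta> < \<bar>c\<bar>\<close> \<open>0 < \<delta>\<close> by (simp add: mult_le_cancel_left)
    moreover have "L \<le> \<bar>c\<bar> * (1 - w i)"
    proof -
      have "L \<le> \<bar>c\<bar> * (1 - real m / real (card S))"
        unfolding L_def using \<open>\<delta> < \<bar>c\<bar>\<close> ratio by (intro mult_right_mono) linarith+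
      also have "\<dots> \<le> \<bar>c\<bar> * (1 - w i)"
        using wi by (intro mult_left_mono) auto
      finally show ?thesis .
    qed
    ultimately show "\<exists>y\<in>G. L \<le> l2norm (\<lambda>k. y k - proj_onto m u y k)"
      using \<open>y \<in> G\<close> by force
  qed
  then have "\<delta> * (1 - real m / real (card S)) \<le> \<delta> * (1/4)"
    using width unfolding L_def by (metis ereal_less_eq(3) order_trans times_divide_eq_right mult_1_right)
  then have "1 - real m / real (card S) \<le> 1/4"
    using \<open>0 < \<delta>\<close> by (simp only: mult_le_cancel_left_pos)
  then show False
    using ratio by linarith
qed

lemma large_coords_finite_card_le:
  assumes "orthosymmetric G" and "l2_convex G" and "0 < \<delta>"
    and "kolm_width G m \<le> ereal (\<delta>/4)"
  shows "finite {i. \<exists>x\<in>G. \<delta> < \<bar>x i\<bar>}" and "3 * card {i. \<exists>x\<in>G. \<delta> < \<bar>x i\<bar>} \<le> 4 * m"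
proof -
  show "finite {i. \<exists>x\<in>G. \<delta> < \<bar>x i\<bar>}"
  proof (rule ccontr)
    assume "infinite {i. \<exists>x\<in>G. \<delta> < \<bar>x i\<bar>}"
    then obtain S where "finite S" "card S = 4 * m + 1" "S \<subseteq> {i. \<exists>x\<in>G. \<delta> < \<bar>x i\<bar>}"
      using infinite_arbitrarily_large by blast
    then show False
      using card_large_coords_subset_le[OF assms] by fastforce
  qed
  then show "3 * card {i. \<exists>x\<in>G. \<delta> < \<bar>x i\<bar>} \<le> 4 * m"
    using card_large_coords_subset_le[OF assms] by blast
qed

lemma sum_sq_small_coords_le:
  assumes os: "orthosymmetric G" and cv: "l2_convex G" and x: "x \<in> G"
    and width: "kolm_width G n \<le> ereal \<eta>"
    and F: "finite F" and small: "\<And>i. i \<in> F \<Longrightarrow> \<bar>x i\<bar> \<le> \<delta>"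
  shows "(\<Sum>i\<in>F. (x i)\<^sup>2) \<le> \<eta> * sqrt (\<Sum>i\<in>F. (x i)\<^sup>2) + real n * \<delta>\<^sup>2"
proof (cases "(\<Sum>i\<in>F. (x i)\<^sup>2) = 0")
  case True
  then show ?thesis by simp
next
  case False
  define R where "R = sqrt (\<Sum>i\<in>F. (x i)\<^sup>2)"
  have R_sq: "R\<^sup>2 = (\<Sum>i\<in>F. (x i)\<^sup>2)"
    unfolding R_def by (simp add: sum_nonneg)
  have "0 < R"
    using False unfolding R_def by (simp add: sum_nonneg order_neq_le_trans)
  have "ereal ((R\<^sup>2 - real n * \<delta>\<^sup>2) / R) \<le> kolm_width G n"
  proof (rule kolm_width_lower_bound)
    fix u assume u: "orthonormal_family n u"
    obtain y where "y \<in> G"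
      and y: "R\<^sup>2 - (\<Sum>i\<in>F. (x i)\<^sup>2 * (\<Sum>j<n. (u j i)\<^sup>2)) \<le> l2norm (\<lambda>i. y i - proj_onto n u y i) * R"
      using exists_point_with_large_residual[OF os cv x F u, folded R_def R_sq] by blast
    have "(\<Sum>i\<in>F. (x i)\<^sup>2 * (\<Sum>j<n. (u j i)\<^sup>2)) \<le> (\<Sum>i\<in>F. \<delta>\<^sup>2 * (\<Sum>j<n. (u j i)\<^sup>2))"
    proof (rule sum_mono)
      fix i assume "i \<in> F"
      then have "(x i)\<^sup>2 \<le> \<delta>\<^sup>2"
        using small power_mono[of "\<bar>x i\<bar>" \<delta> 2] by simp
      then show "(x i)\<^sup>2 * (\<Sum>j<n. (u j i)\<^sup>2) \<le> \<delta>\<^sup>2 * (\<Sum>j<n. (u j i)\<^sup>2)"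
        by (intro mult_right_mono) (auto simp: sum_nonneg)
    qed
    also have "\<dots> \<le> \<delta>\<^sup>2 * real n"
      by (simp add: sum_distrib_left[symmetric] mult_left_mono orthonormal_family_sum_weights_le[OF u F])
    finally have "(R\<^sup>2 - real n * \<delta>\<^sup>2) / R \<le> l2norm (\<lambda>i. y i - proj_onto n u y i)"
      using y \<open>0 < R\<close> by (simp add: divide_le_eq mult.commute)
    then show "\<exists>y\<in>G. (R\<^sup>2 - real n * \<delta>\<^sup>2) / R \<le> l2norm (\<lambda>i. y i - proj_onto n u y i)"
      using \<open>y \<in> G\<close> by blast
  qed
  then have "(R\<^sup>2 - real n * \<delta>\<^sup>2) / R \<le> \<eta>"
    using width by (metis ereal_less_eq(3) order_trans)
  then show ?thesis
    using \<open>0 < R\<close> by (simp add: divide_le_eq R_sq[symmetric] R_def[symmetric] mult.commute)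
qed

lemma le_sq_of_le_sqrt_bound:
  fixes S e :: real
  assumes "0 \<le> S" and "0 < e" and "S \<le> e/4 * sqrt S + e\<^sup>2/2"
  shows "S \<le> e\<^sup>2"
proof -
  define r where "r = sqrt S"
  have "S = r\<^sup>2" and "0 \<le> r"
    using assms(1) by (simp_all add: r_def)
  have "r \<le> e"
  proof (rule ccontr)
    assume "\<not> r \<le> e"
    then have "e * r < r * r" and "e * e < r * r"
      using \<open>0 < e\<close> by (simp_all add: mult_strict_mono)
    moreover have "r * r \<le> e * r / 4 + e * e / 2"
      using assms(3) \<open>0 \<le> r\<close> unfolding \<open>S = r\<^sup>2\<close> r_def[symmetric] by (simp add: power2_eq_square)
    ultimately show False
      using zero_le_square[of r] by linarith
  qed
  then show ?thesis
    using \<open>S = r\<^sup>2\<close> \<open>0 \<le> r\<close> by (simp add: power_mono)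
qed

lemma coord_kolm_dim_le_twice_kolm_dim:
  assumes os: "orthosymmetric G" and cv: "l2_convex G" and cp: "l2_compact G"
    and "0 < \<epsilon>" and "0 < \<delta>"
    and balance: "real (kolm_dim G (\<epsilon>/4)) * \<delta>\<^sup>2 \<le> \<epsilon>\<^sup>2/2"
  shows "coord_kolm_dim G \<epsilon> \<le> 2 * kolm_dim G (\<delta>/4)"
proof -
  define A where "A = {i. \<exists>x\<in>G. \<delta> < \<bar>x i\<bar>}"
  have "finite A" and card_A: "3 * card A \<le> 4 * kolm_dim G (\<delta>/4)"
    using large_coords_finite_card_le[OF os cv \<open>0 < \<delta>\<close> kolm_width_kolm_dim_le[OF cp]] \<open>0 < \<delta>\<close>
    unfolding A_def by simp_all
  have tail: "(\<Sum>i. if i \<in> A then 0 else (x i)\<^sup>2) \<le> \<epsilon>\<^sup>2" if "x \<in> G" for x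
  proof (rule suminf_le_const)
    have "summable (\<lambda>i. (x i)\<^sup>2)"
      using cp \<open>x \<in> G\<close> by (auto simp: l2_compact_def ell2_def)
    then show "summable (\<lambda>i. if i \<in> A then 0 else (x i)\<^sup>2)"
      by (rule summable_comparison_test'[where N = 0]) auto
  next
    fix k
    define F where "F = {..<k} - A"
    have "finite F" and small: "\<And>i. i \<in> F \<Longrightarrow> \<bar>x i\<bar> \<le> \<delta>"
      using \<open>x \<in> G\<close> by (auto simp: F_def A_def not_less)
    have "(\<Sum>i\<in>F. (x i)\<^sup>2) \<le> \<epsilon>/4 * sqrt (\<Sum>i\<in>F. (x i)\<^sup>2) + real (kolm_dim G (\<epsilon>/4)) * \<delta>\<^sup>2"
      using \<open>0 < \<epsilon>\<close> by (intro sum_sq_small_coords_le[OF os cv \<open>x \<in> G\<close> kolm_width_kolm_dim_le[OF cp] \<open>finite F\<close> small]) simp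
    then have "(\<Sum>i\<in>F. (x i)\<^sup>2) \<le> \<epsilon>\<^sup>2"
      using balance \<open>0 < \<epsilon>\<close> by (intro le_sq_of_le_sqrt_bound) (auto simp: sum_nonneg)
    then show "(\<Sum>i<k. if i \<in> A then 0 else (x i)\<^sup>2) \<le> \<epsilon>\<^sup>2"
      by (simp add: F_def sum.If_cases Diff_eq)
  qed
  have "coord_kolm_dim G \<epsilon> \<le> card A"
    unfolding coord_kolm_dim_def
  proof (rule Least_le)
    show "\<exists>A'. finite A' \<and> card A' = card A \<and>
            (SUP x\<in>G. ereal (\<Sum>i. if i \<in> A' then 0 else (x i)\<^sup>2)) \<le> ereal (\<epsilon>\<^sup>2)"
      using \<open>finite A\<close> tail by (intro exI[of _ A]) (simp add: SUP_least)
  qed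
  then show ?thesis
    using card_A by linarith
qed

lemma powr_neg_divide: "((x::real) / y) powr (-p) = y powr p * x powr (-p)"
  unfolding powr_divide powr_minus[of y] by (simp only: divide_inverse inverse_inverse_eq mult.commute)

lemma fine_scale_bounds:
  fixes p K \<epsilon> :: real
  assumes "0 < p" "p < 1" "0 < K" "0 < \<epsilon>" "\<epsilon> \<le> 1"
  defines "\<delta> \<equiv> \<epsilon> powr (1 / (1 - p)) / sqrt (2 * K + 1)"
  shows "0 < \<delta>" and "\<delta> \<le> 1" and "K * \<epsilon> powr (-p) * \<delta>\<^sup>2 \<le> \<epsilon>\<^sup>2 / 2"
    and "\<delta> powr (-p) = (2 * K + 1) powr (p / 2) * \<epsilon> powr (- p / (1 - p))"
proof -
  show "0 < \<delta>"
    using assms by (simp add: \<delta>_def)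
  have "\<epsilon> powr (1 / (1 - p)) \<le> 1"
    using assms by (intro powr_le1) auto
  moreover have "1 \<le> sqrt (2 * K + 1)"
    using assms by simp
  ultimately have "\<epsilon> powr (1 / (1 - p)) \<le> sqrt (2 * K + 1)"
    by linarith
  then show "\<delta> \<le> 1"
    using assms by (simp add: \<delta>_def divide_le_eq_1)
  have "\<delta>\<^sup>2 = \<epsilon> powr (2 / (1 - p)) / (2 * K + 1)"
    using assms by (simp add: \<delta>_def power_divide powr_power)
  then have "K * \<epsilon> powr (-p) * \<delta>\<^sup>2 = K * (\<epsilon> powr (-p) * \<epsilon> powr (2 / (1 - p))) / (2 * K + 1)"
    by simp
  also have "\<epsilon> powr (-p) * \<epsilon> powr (2 / (1 - p)) = \<epsilon> powr (2 / (1 - p) - p)"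
    by (simp add: powr_add[symmetric])
  also have "\<dots> \<le> \<epsilon> powr 2"
  proof (rule powr_mono')
    have "2 * (1 - p) \<le> 2 - p * (1 - p)"
      using assms by (simp add: algebra_simps)
    then show "2 \<le> 2 / (1 - p) - p"
      using assms by (simp add: field_simps)
  qed (use assms in auto)
  also have "\<dots> = \<epsilon>\<^sup>2"
    using assms by simp
  finally have "K * \<epsilon> powr (-p) * \<delta>\<^sup>2 \<le> K * \<epsilon>\<^sup>2 / (2 * K + 1)"
    using assms by (simp add: divide_right_mono)
  also have "\<dots> \<le> \<epsilon>\<^sup>2 / 2"
    using assms by (simp add: field_simps)
  finally show "K * \<epsilon> powr (-p) * \<delta>\<^sup>2 \<le> \<epsilon>\<^sup>2 / 2" .
  have "sqrt (2 * K + 1) powr p = (2 * K + 1) powr (p / 2)"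
    using assms by (simp add: powr_half_sqrt[symmetric] powr_powr)
  then show "\<delta> powr (-p) = (2 * K + 1) powr (p / 2) * \<epsilon> powr (- p / (1 - p))"
    unfolding \<delta>_def powr_neg_divide by (simp add: powr_powr)
qed

theorem mainTheorem14:
  fixes G :: "(nat \<Rightarrow> real) set" and p C :: real
  assumes "orthosymmetric G" and "l2_convex G" and "l2_compact G"
    and "0 < p" and "p < 1"
    and "C > 0"
    and "\<forall>\<epsilon>. 0 < \<epsilon> \<and> \<epsilon> \<le> 1 \<longrightarrow> real (kolm_dim G \<epsilon>) \<le> C * \<epsilon> powr (-p)"
  shows "\<exists>C'>0. \<forall>\<epsilon>. 0 < \<epsilon> \<and> \<epsilon> \<le> 1 \<longrightarrow>
           real (coord_kolm_dim G \<epsilon>) \<le> C' * \<epsilon> powr (- p / (1 - p))"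
proof -
  define K where "K = C * 4 powr p"
  have "0 < K"
    using \<open>C > 0\<close> by (simp add: K_def)
  have dim: "real (kolm_dim G (t / 4)) \<le> K * t powr (-p)" if "0 < t" "t \<le> 1" for t
    using assms(7)[rule_format, of "t / 4"] that by (simp add: K_def powr_neg_divide mult.assoc)
  show ?thesis
  proof (intro exI[of _ "2 * K * (2 * K + 1) powr (p / 2)"] conjI allI impI)
    fix \<epsilon> :: real assume \<epsilon>: "0 < \<epsilon> \<and> \<epsilon> \<le> 1"
    define \<delta> where "\<delta> = \<epsilon> powr (1 / (1 - p)) / sqrt (2 * K + 1)"
    note \<delta> = fine_scale_bounds[OF \<open>0 < p\<close> \<open>p < 1\<close> \<open>0 < K\<close>, of \<epsilon>, folded \<delta>_def]
    have "real (kolm_dim G (\<epsilon> / 4)) * \<delta>\<^sup>2 \<le> K * \<epsilon> powr (-p) * \<delta>\<^sup>2"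
      using dim \<epsilon> by (intro mult_right_mono) auto
    also have "\<dots> \<le> \<epsilon>\<^sup>2 / 2"
      using \<delta>(3) \<epsilon> by blast
    finally have "coord_kolm_dim G \<epsilon> \<le> 2 * kolm_dim G (\<delta> / 4)"
      using \<epsilon> \<delta>(1) by (intro coord_kolm_dim_le_twice_kolm_dim[OF assms(1-3)]) auto
    then have "real (coord_kolm_dim G \<epsilon>) \<le> 2 * real (kolm_dim G (\<delta> / 4))"
      by (metis of_nat_le_iff of_nat_mult of_nat_numeral)
    also have "\<dots> \<le> 2 * (K * \<delta> powr (-p))"
      using dim[of \<delta>] \<delta>(1,2) \<epsilon> by simp
    also have "\<dots> = 2 * K * (2 * K + 1) powr (p / 2) * \<epsilon> powr (- p / (1 - p))"
      using \<delta>(4) \<epsilon> by simp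
    finally show "real (coord_kolm_dim G \<epsilon>) \<le> 2 * K * (2 * K + 1) powr (p / 2) * \<epsilon> powr (- p / (1 - p))" .
  qed (use \<open>0 < K\<close> in simp)
qed

end
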